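(* Assume the MDP satisfies the low-rank assumption with parameter $d$. For any two policies $\pi^\theta,\pi^\beta$ and all $t\ge2$ (with $t\le H$), \[ \big\|(\mu_t^{\pi^\theta}\mathbf 1^\top)\circ\pi^\theta_t-(\mu_t^{\pi^\beta}\mathbf 1^\top)\circ\pi^\theta_t\big\|_{\mathrm{op}}\le\sqrt{dS^2A}\,\big\|d_{t-1}^{\pi^\beta}-d_{t-1}^{\pi^\theta}\big\|_{\mathrm{op}}. \]
   Context: MDP: finite state space $\mathcal S$ ($S=|\mathcal S|$), finite action space $\mathcal A$ ($A=|\mathcal A|$), horizon $H$, transitions $P_t(\cdot\mid s,a)$, initial distribution $\mu_1$. For a policy $\pi=\{\pi_t\}$: $s_1\sim\mu_1$, $a_t\sim\pi_t(\cdot\mid s_t)$, $s_{t+1}\sim P_t(\cdot\mid s_t,a_t)$; $\mu_t^\pi(s)=\Pr_\pi(s_t=s)$ (a vector in $\mathbb R^S$), $d_t^\pi(s,a)=\Pr_\pi(s_t=s,a_t=a)$ and $\pi_t$ (entries $\pi_t(a\mid s)$) are viewed as $S\times A$ matrices; $\mathbf 1\in\mathbb R^A$ is the all-ones vector; $\circ$ is the entrywise product; $\|\cdot\|_{\mathrm{op}}$ the spectral norm. Low-rank assumption with parameter $d$: with $d'=\lfloor d/2\rfloor$, for each $t$ either $P_t(s'\mid s,a)=\sum_{i=1}^{d'}u_{t,i}(s',s)w_{t,i}(a)$ for all $s',s,a$, or $P_t(s'\mid s,a)=\sum_{i=1}^{d'}u_{t,i}(s)w_{t,i}(s',a)$ for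 all $s',s,a$ (and each reward has rank at most $d'$). *)

theory Defs
  imports "HOL-Analysis.Analysis"
begin

text \<open>Transitions: P t s a s' = P_t(s' | s, a).  Policy: pol t s a = pi_t(a | s).
  Initial distribution m1 = mu_1.  Time indices start at 1.\<close>

primrec state_marg ::
  "('s::finite \<Rightarrow> real) \<Rightarrow> (nat \<Rightarrow> 's \<Rightarrow> 'a::finite \<Rightarrow> 's \<Rightarrow> real)
   \<Rightarrow> (nat \<Rightarrow> 's \<Rightarrow> 'a \<Rightarrow> real) \<Rightarrow> nat \<Rightarrow> 's \<Rightarrow> real" where
  "state_marg m1 P pol 0 = m1"
| "state_marg m1 P pol (Suc t) =
     (if t = 0 then m1
      else (\<lambda>s'. \<Sum>s\<in>UNIV. \<Sum>a\<in>UNIV. state_marg m1 P pol t s * pol t s a * P t s a s'))"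

text \<open>Occupancy measure d_t^pol(s,a) = Pr_pi(s_t = s, a_t = a), as an S x A matrix.\<close>
definition occ_mat ::
  "('s::finite \<Rightarrow> real) \<Rightarrow> (nat \<Rightarrow> 's \<Rightarrow> 'a::finite \<Rightarrow> 's \<Rightarrow> real)
   \<Rightarrow> (nat \<Rightarrow> 's \<Rightarrow> 'a \<Rightarrow> real) \<Rightarrow> nat \<Rightarrow> real^'a^'s" where
  "occ_mat m1 P pol t = (\<chi> s a. state_marg m1 P pol t s * pol t s a)"

definition op_norm :: "real^'n::finite^'m::finite \<Rightarrow> real" where
  "op_norm M = onorm (\<lambda>x. M *v x)"

definition low_rank_kernel :: "nat \<Rightarrow> ('s \<Rightarrow> 'a \<Rightarrow> 's \<Rightarrow> real) \<Rightarrow> bool" where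
  "low_rank_kernel d Pt \<longleftrightarrow>
     (\<exists>u :: nat \<Rightarrow> 's \<Rightarrow> 's \<Rightarrow> real. \<exists>w :: nat \<Rightarrow> 'a \<Rightarrow> real.
        \<forall>s' s a. Pt s a s' = (\<Sum>i<d div 2. u i s' s * w i a))
   \<or> (\<exists>u :: nat \<Rightarrow> 's \<Rightarrow> real. \<exists>w :: nat \<Rightarrow> 's \<Rightarrow> 'a \<Rightarrow> real.
        \<forall>s' s a. Pt s a s' = (\<Sum>i<d div 2. u i s * w i s' a))"

end

theory Submission
  imports Defs
begin

text \<open>For t = k + 1 the state marginal is the occupancy matrix at time k pushed through the
  kernel P_k, so the marginal gap is a linear image of the occupancy gap D.  Cauchy-Schwarz,
  the Frobenius bound |D|_F \<le> sqrt S |D|_op and the fact that the squared entries of a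
  stochastic kernel sum to at most S A bound that gap in L2 by sqrt (S^2 A) |D|_op.  Scaling
  the rows of a row-stochastic matrix by the entries of v gives spectral norm at most the
  L2 norm of v.  The low-rank structure only enters through d \<ge> 2 (a kernel of rank 0 is
  not stochastic).\<close>

lemma op_norm_nonneg: "0 \<le> op_norm (M :: real^'n::finite^'m::finite)"
  unfolding op_norm_def by (rule onorm_pos_le) simp

lemma op_norm_minus_commute:
  fixes A B :: "real^'n::finite^'m::finite"
  shows "op_norm (A - B) = op_norm (B - A)"
proof -
  have "(\<lambda>x. (A - B) *v x) = (\<lambda>x. - ((B - A) *v x))"
    by (simp add: matrix_vector_mult_diff_rdistrib)
  then show ?thesis
    unfolding op_norm_def by (simp add: onorm_neg)
qed

lemma norm_power2_cart: "(norm (x :: real^'n::finite))\<^sup>2 = (\<Sum>i\<in>UNIV. (x$i)\<^sup>2)"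
  unfolding power2_norm_eq_inner inner_vec_def by (simp add: power2_eq_square)

lemma norm_row_le_op_norm:
  fixes D :: "real^'a::finite^'s::finite"
  shows "norm (D$s) \<le> op_norm D"
proof -
  have "(norm (D$s))\<^sup>2 = (D *v D$s)$s"
    unfolding norm_power2_cart by (simp add: matrix_vector_mult_def power2_eq_square)
  also have "\<dots> \<le> norm (D *v D$s)"
    using component_le_norm_cart[of "D *v D$s" s] by linarith
  also have "\<dots> \<le> op_norm D * norm (D$s)"
    unfolding op_norm_def by (rule onorm) simp
  finally have "(norm (D$s))\<^sup>2 \<le> op_norm D * norm (D$s)" .
  then show ?thesis
    using op_norm_nonneg[of D] by (cases "norm (D$s) = 0") (simp_all add: power2_eq_square)
qed

lemma sum_entries_power2_le_op_norm:
  fixes D :: "real^'a::finite^'s::finite"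
  shows "(\<Sum>s\<in>UNIV. \<Sum>a\<in>UNIV. (D$s$a)\<^sup>2) \<le> real CARD('s) * (op_norm D)\<^sup>2"
proof -
  have "(\<Sum>a\<in>UNIV. (D$s$a)\<^sup>2) \<le> (op_norm D)\<^sup>2" for s
    using norm_row_le_op_norm[of D s]
    by (simp add: power_mono flip: norm_power2_cart)
  then have "(\<Sum>s\<in>UNIV. \<Sum>a\<in>UNIV. (D$s$a)\<^sup>2) \<le> (\<Sum>s\<in>(UNIV::'s set). (op_norm D)\<^sup>2)"
    by (rule sum_mono)
  then show ?thesis by simp
qed

lemma abs_stochastic_combination_le_norm:
  fixes x :: "real^'a::finite"
  assumes nonneg: "\<And>a. 0 \<le> p a" and sum_one: "(\<Sum>a\<in>UNIV. p a) = 1"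
  shows "\<bar>\<Sum>a\<in>UNIV. p a * x$a\<bar> \<le> norm x"
proof -
  have "\<bar>\<Sum>a\<in>UNIV. p a * x$a\<bar> \<le> (\<Sum>a\<in>UNIV. \<bar>p a * x$a\<bar>)"
    by (rule sum_abs)
  also have "\<dots> \<le> (\<Sum>a\<in>UNIV. p a * norm x)"
    by (rule sum_mono) (simp add: abs_mult nonneg mult_left_mono component_le_norm_cart)
  also have "\<dots> = norm x"
    by (simp add: sum_one flip: sum_distrib_right)
  finally show ?thesis .
qed

lemma op_norm_outer_stochastic_le:
  fixes v :: "'s::finite \<Rightarrow> real" and p :: "'s \<Rightarrow> 'a::finite \<Rightarrow> real"
  assumes nonneg: "\<And>s a. 0 \<le> p s a" and sum_one: "\<And>s. (\<Sum>a\<in>UNIV. p s a) = 1"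
  shows "op_norm ((\<chi> s a. v s * p s a) :: real^'a^'s) \<le> L2_set v UNIV"
  unfolding op_norm_def
proof (rule onorm_le)
  fix x :: "real^'a"
  let ?M = "(\<chi> s a. v s * p s a) :: real^'a^'s"
  have "\<bar>(?M *v x)$s\<bar> \<le> \<bar>v s\<bar> * norm x" for s
  proof -
    have "(?M *v x)$s = v s * (\<Sum>a\<in>UNIV. p s a * x$a)"
      by (simp add: matrix_vector_mult_def sum_distrib_left mult.assoc)
    then show ?thesis
      using abs_stochastic_combination_le_norm[of "p s" x] nonneg sum_one
      by (simp add: abs_mult mult_left_mono)
  qed
  then have "norm (?M *v x) \<le> L2_set (\<lambda>s. \<bar>v s\<bar> * norm x) UNIV"
    unfolding norm_vec_def by (intro L2_set_mono) auto
  also have "\<dots> = L2_set v UNIV * norm x"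
    by (simp add: L2_set_def power_mult_distrib real_sqrt_mult flip: sum_distrib_right)
  finally show "norm (?M *v x) \<le> L2_set v UNIV * norm x" .
qed

lemma sum_sum_mult_power2_le:
  fixes f g :: "'s::finite \<Rightarrow> 'a::finite \<Rightarrow> real"
  shows "(\<Sum>s\<in>UNIV. \<Sum>a\<in>UNIV. f s a * g s a)\<^sup>2
     \<le> (\<Sum>s\<in>UNIV. \<Sum>a\<in>UNIV. (f s a)\<^sup>2) * (\<Sum>s\<in>UNIV. \<Sum>a\<in>UNIV. (g s a)\<^sup>2)"
proof -
  have pairs: "(\<Sum>s\<in>UNIV. \<Sum>a\<in>UNIV. h s a) = (\<Sum>p\<in>UNIV. h (fst p) (snd p))"
    for h :: "'s \<Rightarrow> 'a \<Rightarrow> real"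
    by (simp add: sum.cartesian_product case_prod_beta' flip: UNIV_Times_UNIV)
  show ?thesis
    unfolding pairs by (rule Cauchy_Schwarz_ineq_sum)
qed

lemma sum_kernel_power2_le:
  fixes Q :: "'s::finite \<Rightarrow> 'a::finite \<Rightarrow> 'b::finite \<Rightarrow> real"
  assumes nonneg: "\<And>s a b. 0 \<le> Q s a b" and sum_one: "\<And>s a. (\<Sum>b\<in>UNIV. Q s a b) = 1"
  shows "(\<Sum>b\<in>UNIV. \<Sum>s\<in>UNIV. \<Sum>a\<in>UNIV. (Q s a b)\<^sup>2) \<le> real CARD('s) * real CARD('a)"
proof -
  have "Q s a b \<le> 1" for s a b
    using member_le_sum[of b UNIV "Q s a"] nonneg sum_one by simp
  then have "(Q s a b)\<^sup>2 \<le> Q s a b" for s a b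
    using mult_right_mono[of "Q s a b" 1 "Q s a b"] nonneg by (simp add: power2_eq_square)
  then have "(\<Sum>b\<in>UNIV. \<Sum>s\<in>UNIV. \<Sum>a\<in>UNIV. (Q s a b)\<^sup>2)
      \<le> (\<Sum>b\<in>UNIV. \<Sum>s\<in>UNIV. \<Sum>a\<in>UNIV. Q s a b)"
    by (intro sum_mono)
  also have "\<dots> = (\<Sum>s\<in>UNIV. \<Sum>a\<in>UNIV. \<Sum>b\<in>UNIV. Q s a b)"
    by (subst sum.swap) (rule sum.cong[OF refl], rule sum.swap)
  also have "\<dots> = real CARD('s) * real CARD('a)"
    by (simp add: sum_one)
  finally show ?thesis .
qed

lemma L2_set_kernel_image_le:
  fixes D :: "real^'a::finite^'s::finite" and Q :: "'s \<Rightarrow> 'a \<Rightarrow> 'b::finite \<Rightarrow> real"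
  assumes nonneg: "\<And>s a b. 0 \<le> Q s a b" and sum_one: "\<And>s a. (\<Sum>b\<in>UNIV. Q s a b) = 1"
  shows "L2_set (\<lambda>b. \<Sum>s\<in>UNIV. \<Sum>a\<in>UNIV. D$s$a * Q s a b) UNIV
    \<le> sqrt ((real CARD('s))\<^sup>2 * real CARD('a)) * op_norm D"
proof -
  let ?N = "op_norm D"
  have "(\<Sum>s\<in>UNIV. \<Sum>a\<in>UNIV. D$s$a * Q s a b)\<^sup>2
      \<le> (\<Sum>s\<in>UNIV. \<Sum>a\<in>UNIV. (D$s$a)\<^sup>2) * (\<Sum>s\<in>UNIV. \<Sum>a\<in>UNIV. (Q s a b)\<^sup>2)" for b
    by (rule sum_sum_mult_power2_le)
  also have "\<dots> b \<le> real CARD('s) * ?N\<^sup>2 * (\<Sum>s\<in>UNIV. \<Sum>a\<in>UNIV. (Q s a b)\<^sup>2)" for b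
    by (rule mult_right_mono) (simp_all add: sum_entries_power2_le_op_norm sum_nonneg)
  finally have "(\<Sum>b\<in>UNIV. (\<Sum>s\<in>UNIV. \<Sum>a\<in>UNIV. D$s$a * Q s a b)\<^sup>2)
      \<le> (\<Sum>b\<in>UNIV. real CARD('s) * ?N\<^sup>2 * (\<Sum>s\<in>UNIV. \<Sum>a\<in>UNIV. (Q s a b)\<^sup>2))"
    by (rule sum_mono)
  also have "\<dots> = real CARD('s) * ?N\<^sup>2 * (\<Sum>b\<in>UNIV. \<Sum>s\<in>UNIV. \<Sum>a\<in>UNIV. (Q s a b)\<^sup>2)"
    by (simp add: sum_distrib_left)
  also have "\<dots> \<le> real CARD('s) * ?N\<^sup>2 * (real CARD('s) * real CARD('a))"
    using sum_kernel_power2_le[of Q] nonneg sum_one by (simp add: mult_left_mono)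
  also have "\<dots> = (sqrt ((real CARD('s))\<^sup>2 * real CARD('a)) * ?N)\<^sup>2"
    by (simp add: power_mult_distrib power2_eq_square)
  finally show ?thesis
    unfolding L2_set_def by (intro real_le_lsqrt) (simp_all add: op_norm_nonneg)
qed

lemma state_marg_Suc_eq_occ_mat:
  assumes "k \<noteq> 0"
  shows "state_marg m1 P pol (Suc k) s'
    = (\<Sum>s\<in>UNIV. \<Sum>a\<in>UNIV. occ_mat m1 P pol k $ s $ a * P k s a s')"
  using assms by (simp add: occ_mat_def)

lemma low_rank_kernel_stochastic_imp_two_le:
  assumes "low_rank_kernel d Pt" and "(\<Sum>s'\<in>UNIV. Pt s a s') = 1"
  shows "2 \<le> d"
proof (rule ccontr)
  assume "\<not> 2 \<le> d"
  then have "d div 2 = 0" by simp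
  then have "Pt s a s' = 0" for s'
    using assms(1) unfolding low_rank_kernel_def by auto
  with assms(2) show False by simp
qed

theorem lemma7:
  fixes H d t :: nat
    and m1 :: "'s::finite \<Rightarrow> real"
    and P :: "nat \<Rightarrow> 's \<Rightarrow> 'a::finite \<Rightarrow> 's \<Rightarrow> real"
    and \<theta> \<beta> :: "nat \<Rightarrow> 's \<Rightarrow> 'a \<Rightarrow> real"
  assumes init_nonneg: "\<forall>s. m1 s \<ge> 0"
    and init_sum: "(\<Sum>s\<in>UNIV. m1 s) = 1"
    and P_nonneg: "\<forall>k\<in>{1..<H}. \<forall>s a s'. P k s a s' \<ge> 0"
    and P_sum: "\<forall>k\<in>{1..<H}. \<forall>s a. (\<Sum>s'\<in>UNIV. P k s a s') = 1"
    and \<theta>_nonneg: "\<forall>k\<in>{1..H}. \<forall>s a. \<theta> k s a \<ge> 0"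
    and \<theta>_sum: "\<forall>k\<in>{1..H}. \<forall>s. (\<Sum>a\<in>UNIV. \<theta> k s a) = 1"
    and \<beta>_nonneg: "\<forall>k\<in>{1..H}. \<forall>s a. \<beta> k s a \<ge> 0"
    and \<beta>_sum: "\<forall>k\<in>{1..H}. \<forall>s. (\<Sum>a\<in>UNIV. \<beta> k s a) = 1"
    and low_rank: "\<forall>k\<in>{1..<H}. low_rank_kernel d (P k)"
    and t_ge: "2 \<le> t" and t_le: "t \<le> H"
  shows "op_norm ((\<chi> s a. state_marg m1 P \<theta> t s * \<theta> t s a
                          - state_marg m1 P \<beta> t s * \<theta> t s a) :: real^'a^'s)
         \<le> sqrt (real d * real (CARD('s))^2 * real CARD('a))
           * op_norm (occ_mat m1 P \<beta> (t - 1) - occ_mat m1 P \<theta> (t - 1))"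
proof -
  define k where "k = t - 1"
  have t: "t = Suc k" "k \<noteq> 0" "k \<in> {1..<H}" "t \<in> {1..H}"
    using t_ge t_le by (auto simp: k_def)
  define D where "D = occ_mat m1 P \<theta> k - occ_mat m1 P \<beta> k"
  define \<delta> where "\<delta> s' = (\<Sum>s\<in>UNIV. \<Sum>a\<in>UNIV. D$s$a * P k s a s')" for s'
  have "state_marg m1 P \<theta> t s - state_marg m1 P \<beta> t s = \<delta> s" for s
    unfolding t \<delta>_def D_def state_marg_Suc_eq_occ_mat[OF t(2)]
    by (simp add: left_diff_distrib sum_subtractf)
  then have "op_norm ((\<chi> s a. state_marg m1 P \<theta> t s * \<theta> t s a
                            - state_marg m1 P \<beta> t s * \<theta> t s a) :: real^'a^'s)
      = op_norm ((\<chi> s a. \<delta> s * \<theta> t s a) :: real^'a^'s)"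
    by (simp flip: left_diff_distrib)
  also have "\<dots> \<le> L2_set \<delta> UNIV"
    using \<theta>_nonneg \<theta>_sum t(4) by (intro op_norm_outer_stochastic_le) auto
  also have "\<dots> \<le> sqrt ((real CARD('s))\<^sup>2 * real CARD('a)) * op_norm D"
    unfolding \<delta>_def using P_nonneg P_sum t(3) by (intro L2_set_kernel_image_le) auto
  also have "\<dots> \<le> sqrt (real d * (real CARD('s))\<^sup>2 * real CARD('a)) * op_norm D"
  proof -
    have "2 \<le> d"
      using low_rank P_sum t(3) by (meson low_rank_kernel_stochastic_imp_two_le)
    then show ?thesis
      by (intro mult_right_mono real_sqrt_le_mono) (simp_all add: op_norm_nonneg)
  qed
  finally show ?thesis
    by (simp add: D_def k_def op_norm_minus_commute)
qed

end
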